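(* Let $n\ge1$ and let $V=\bigoplus_{i=1}^{2n-1}V_i$, $W=\bigoplus_{i=1}^{2n-1}W_i$ be graded complex vector spaces with $\dim V_i=\dim V_{2n-i}$, $W_i=0$ for $i\ne n$, $\dim W_n=2$, and satisfying the nonemptiness condition below. Let $\sigma_n$ be an involution of $W_n$, $\langle\cdot,\cdot\rangle_n$ a nondegenerate skew-symmetric bilinear form on $W_n$, $(w,y)_n:=\langle w,\sigma_n(y)\rangle_n$, and $x\mapsto x^{\mathbf t}$ the transpose anti-automorphism of $\mathrm{End}(W_n)$ with respect to $(\cdot,\cdot)_n$. Then for every $(B_{i,j},\Gamma_i,\Delta_i)\in\Lambda^{\mathrm A_{2n-1}}(V,W)$ and every $1\le j\le n$, \[(\Delta_nB_{n,n-j+1,n}\Gamma_n)^{\mathbf t}=(-1)^j\,\sigma_n\Delta_nB_{n,n+j-1,n}\Gamma_n\sigma_n.\]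
   Context: $B_{i,j}$ ($|i-j|=1$) is a linear map $V_j\to V_i$, $\Gamma_i:W_i\to V_i$, $\Delta_i:V_i\to W_i$. $\Lambda^{\mathrm A_{2n-1}}(V,W)$ is the set of tuples satisfying (with $B_{0,1},B_{1,0},B_{2n,2n-1},B_{2n-1,2n}$ zero): $B_{i,i+1}B_{i+1,i}-B_{i,i-1}B_{i-1,i}=\Gamma_i\Delta_i$ for $1\le i\le n-1$; $-B_{n,n-1}B_{n-1,n}-B_{n,n+1}B_{n+1,n}=\Gamma_n\Delta_n$; $B_{i,i-1}B_{i-1,i}-B_{i,i+1}B_{i+1,i}=\Gamma_i\Delta_i$ for $n+1\le i\le2n-1$. Path notation: $B_{n,n-j+1,n}=B_{n,n-1}B_{n-1,n-2}\cdots B_{n-j+2,n-j+1}B_{n-j+1,n-j+2}\cdots B_{n-1,n}$ (the composite along the path $n\to n-1\to\dots\to n-j+1\to\dots\to n$), and similarly $B_{n,n+j-1,n}=B_{n,n+1}\cdots B_{n+j-2,n+j-1}B_{n+j-1,n+j-2}\cdots B_{n+1,n}$; for $j=1$ both are $\mathrm{id}_{V_n}$. Nonemptiness condition: with $v_i=\dim V_i$, put $s_1=1-v_1$ and $s_i=1-v_i+v_{i-1}$ for $2\le i\le n$; then $s_i\in\{-1,0,1\}$ for all $i$ and $|\{i:s_i\ne0\}|\le n$. *)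

theory Defs
  imports Complex_Main "Jordan_Normal_Form.Determinant"
begin

text \<open>Linear maps between finite-dimensional complex spaces are represented by
matrices w.r.t. chosen bases: V_i = C^(v i), W_i = C^(w i).\<close>

text \<open>B_{i,j} with the convention that arrows touching vertices outside 1..2n-1 are zero.\<close>
definition Bz :: "nat \<Rightarrow> (nat \<Rightarrow> nat) \<Rightarrow> (nat \<Rightarrow> nat \<Rightarrow> complex mat) \<Rightarrow> nat \<Rightarrow> nat \<Rightarrow> complex mat" where
  "Bz n v B i j = (if 1 \<le> i \<and> i \<le> 2*n-1 \<and> 1 \<le> j \<and> j \<le> 2*n-1 then B i j else 0\<^sub>m (v i) (v j))"

definition Lambda_A :: "nat \<Rightarrow> (nat \<Rightarrow> nat) \<Rightarrow> (nat \<Rightarrow> nat) \<Rightarrow> (nat \<Rightarrow> nat \<Rightarrow> complex mat)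
    \<Rightarrow> (nat \<Rightarrow> complex mat) \<Rightarrow> (nat \<Rightarrow> complex mat) \<Rightarrow> bool" where
  "Lambda_A n v w B \<Gamma> \<Delta> \<longleftrightarrow>
    (\<forall>i j. 1 \<le> i \<and> i \<le> 2*n-1 \<and> 1 \<le> j \<and> j \<le> 2*n-1 \<and> (j = i+1 \<or> i = j+1)
        \<longrightarrow> B i j \<in> carrier_mat (v i) (v j)) \<and>
    (\<forall>i. 1 \<le> i \<and> i \<le> 2*n-1 \<longrightarrow> \<Gamma> i \<in> carrier_mat (v i) (w i) \<and> \<Delta> i \<in> carrier_mat (w i) (v i)) \<and>
    (\<forall>i. 1 \<le> i \<and> i \<le> n-1 \<longrightarrow>
        Bz n v B i (i+1) * Bz n v B (i+1) i - Bz n v B i (i-1) * Bz n v B (i-1) i = \<Gamma> i * \<Delta> i) \<and>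
    (- (Bz n v B n (n-1) * Bz n v B (n-1) n) - Bz n v B n (n+1) * Bz n v B (n+1) n = \<Gamma> n * \<Delta> n) \<and>
    (\<forall>i. n+1 \<le> i \<and> i \<le> 2*n-1 \<longrightarrow>
        Bz n v B i (i-1) * Bz n v B (i-1) i - Bz n v B i (i+1) * Bz n v B (i+1) i = \<Gamma> i * \<Delta> i)"

text \<open>Path composites: path_down v B m k = B_{m,m-1} ... B_{m-k,m-k+1} ... B_{m-1,m},
  so that B_{n,n-j+1,n} = path_down v B n (j-1); similarly path_up.\<close>
fun path_down :: "(nat \<Rightarrow> nat) \<Rightarrow> (nat \<Rightarrow> nat \<Rightarrow> complex mat) \<Rightarrow> nat \<Rightarrow> nat \<Rightarrow> complex mat" where
  "path_down v B m 0 = 1\<^sub>m (v m)"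
| "path_down v B m (Suc k) = B m (m-1) * path_down v B (m-1) k * B (m-1) m"

fun path_up :: "(nat \<Rightarrow> nat) \<Rightarrow> (nat \<Rightarrow> nat \<Rightarrow> complex mat) \<Rightarrow> nat \<Rightarrow> nat \<Rightarrow> complex mat" where
  "path_up v B m 0 = 1\<^sub>m (v m)"
| "path_up v B m (Suc k) = B m (m+1) * path_up v B (m+1) k * B (m+1) m"

definition s_coord :: "(nat \<Rightarrow> nat) \<Rightarrow> nat \<Rightarrow> int" where
  "s_coord v i = (if i = 1 then 1 - int (v 1) else 1 - int (v i) + int (v (i-1)))"

definition nonempty_cond :: "nat \<Rightarrow> (nat \<Rightarrow> nat) \<Rightarrow> bool" where
  "nonempty_cond n v \<longleftrightarrow> (\<forall>i\<in>{1..n}. s_coord v i \<in> {-1, 0, 1}) \<and>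
     card {i\<in>{1..n}. s_coord v i \<noteq> 0} \<le> n"

text \<open>Bilinear form given by a matrix: (w, y) = w^T J y (no conjugation).\<close>
definition bilin :: "complex mat \<Rightarrow> complex vec \<Rightarrow> complex vec \<Rightarrow> complex" where
  "bilin J w y = w \<bullet> (J *\<^sub>v y)"

definition form_transpose :: "(complex vec \<Rightarrow> complex vec \<Rightarrow> complex) \<Rightarrow> nat \<Rightarrow> complex mat \<Rightarrow> complex mat" where
  "form_transpose f d x = (THE x'. x' \<in> carrier_mat d d \<and>
     (\<forall>w\<in>carrier_vec d. \<forall>y\<in>carrier_vec d. f (x *\<^sub>v w) y = f w (x' *\<^sub>v y)))"

end

theory Submission
  imports Defs
begin

text \<open>Away from the central vertex \<open>W_i = 0\<close>, so the relation at \<open>i \<noteq> n\<close> says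
  \<open>B_{i,i+1} B_{i+1,i} = B_{i,i-1} B_{i-1,i}\<close>. Hence both path composites are powers of the
  central loops \<open>a = B_{n,n-1} B_{n-1,n}\<close> and \<open>b = B_{n,n+1} B_{n+1,n}\<close>; walking this ladder
  to the ends of the quiver gives \<open>a^n = b^n = 0\<close>, and the central relation reads
  \<open>a + \<Gamma>\<Delta> = -b\<close>.
  For the 2\<times>2 matrices \<open>f_k = \<Delta> a^k \<Gamma>\<close> and \<open>g_k = \<Delta> (a + \<Gamma>\<Delta>)^k \<Gamma>\<close>, expanding
  \<open>(a + \<Gamma>\<Delta>)^k\<close> gives \<open>G = F + z G F\<close> for the generating polynomials, i.e.
  \<open>(1 + z G)(1 - z F) = 1\<close>. Thus \<open>det (1 - z F)\<close> is a unit polynomial with constant term 1,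
  hence equal to 1, and the inverse of a 2\<times>2 matrix of determinant 1 is its adjugate:
  \<open>g_k = - adj f_k\<close>. Finally \<open>x^T J = J adj x\<close> for skew \<open>J\<close>, so the transpose of \<open>x\<close>
  with respect to \<open>(w, y) = \<langle>w, \<sigma> y\<rangle>\<close> is \<open>\<sigma> adj(x) \<sigma>\<close>.\<close>

lemma det_1x1: "A \<in> carrier_mat 1 1 \<Longrightarrow> det A = A $$ (0,0)"
  by (simp add: det_def' sign_def)

lemma det_2x2:
  fixes A :: "'a::comm_ring_1 mat"
  assumes A: "A \<in> carrier_mat 2 2"
  shows "det A = A $$ (0,0) * A $$ (1,1) - A $$ (0,1) * A $$ (1,0)"
  using A by (simp add: laplace_expansion_row[OF A, of 0] cofactor_def det_1x1 numeral_2_eq_2 mat_delete_def)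

lemma adj_mat_2x2:
  fixes A :: "'a::comm_ring_1 mat"
  assumes A: "A \<in> carrier_mat 2 2"
  shows "adj_mat A = mat 2 2 (\<lambda>(i,j). if i = j then A $$ (1-i, 1-j) else - A $$ (i,j))"
  using A by (intro eq_matI) (auto simp: adj_mat_def cofactor_def det_1x1 numeral_2_eq_2 mat_delete_def less_Suc_eq)

lemma mat_2x2_eqI:
  fixes A B :: "'a mat"
  assumes "A \<in> carrier_mat 2 2" "B \<in> carrier_mat 2 2"
    and "A $$ (0,0) = B $$ (0,0)" "A $$ (0,1) = B $$ (0,1)"
    and "A $$ (1,0) = B $$ (1,0)" "A $$ (1,1) = B $$ (1,1)"
  shows "A = B"
  using assms by (intro eq_matI) (auto simp: numeral_2_eq_2 less_Suc_eq)

lemma transpose_mult_skew_2x2: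
  fixes J X :: "'a::{idom,ring_char_0} mat"
  assumes J: "J \<in> carrier_mat 2 2" and X: "X \<in> carrier_mat 2 2" and skew: "transpose_mat J = - J"
  shows "transpose_mat X * J = J * adj_mat X"
proof -
  have "J $$ (j,i) = - J $$ (i,j)" if "i < 2" "j < 2" for i j
    using arg_cong[OF skew, of "\<lambda>A. A $$ (i,j)"] J that by simp
  from this[of 0 0] this[of 1 1] this[of 0 1]
  have "J $$ (0,0) = 0" "J $$ (1,1) = 0" "J $$ (1,0) = - J $$ (0,1)" by auto
  with J X show ?thesis
    by (intro mat_2x2_eqI) (auto simp: adj_mat_2x2 scalar_prod_def numeral_2_eq_2 algebra_simps)
qed

lemma adj_mat_eqI:
  fixes X Y :: "'a::comm_ring_1 mat"
  assumes X: "X \<in> carrier_mat n n" and Y: "Y \<in> carrier_mat n n"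
    and inv: "Y * X = 1\<^sub>m n" and det: "det X = 1"
  shows "Y = adj_mat X"
proof -
  have adj: "adj_mat X \<in> carrier_mat n n" "X * adj_mat X = 1\<^sub>m n"
    using adj_mat[OF X] det by (auto intro!: eq_matI)
  have "Y = Y * (X * adj_mat X)" using adj Y by simp
  also have "\<dots> = (Y * X) * adj_mat X" using adj X Y by simp
  finally show ?thesis using inv adj by simp
qed

section \<open>Transposes with respect to a bilinear form\<close>

lemma mult_left_cancel_mat:
  fixes M Z Y :: "'a::field mat"
  assumes M: "M \<in> carrier_mat d d" and det: "det M \<noteq> 0"
    and Z: "Z \<in> carrier_mat d d" and Y: "Y \<in> carrier_mat d d" and eq: "M * Z = M * Y"
  shows "Z = Y"
proof -
  have left_inverse: "adj_mat M * (M * A) = det M \<cdot>\<^sub>m A" if "A \<in> carrier_mat d d" for A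
  proof -
    have "adj_mat M * (M * A) = (adj_mat M * M) * A" using adj_mat(1)[OF M] M that by simp
    also have "\<dots> = det M \<cdot>\<^sub>m A"
      using adj_mat(3)[OF M] that mult_smult_assoc_mat[of "1\<^sub>m d" d d A d] by simp
    finally show ?thesis .
  qed
  have scaled: "det M \<cdot>\<^sub>m Z = det M \<cdot>\<^sub>m Y" using left_inverse[OF Z] left_inverse[OF Y] eq by simp
  show ?thesis
  proof (rule eq_matI)
    fix i j assume "i < dim_row Y" "j < dim_col Y"
    then show "Z $$ (i,j) = Y $$ (i,j)"
      using arg_cong[OF scaled, of "\<lambda>A. A $$ (i,j)"] det Z Y by simp
  qed (use Z Y in auto)
qed

lemma eq_mat_by_scalar_prod:
  fixes P Q :: "'a::semiring_1 mat"
  assumes P: "P \<in> carrier_mat n n" and Q: "Q \<in> carrier_mat n n"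
    and eq: "\<And>w y. w \<in> carrier_vec n \<Longrightarrow> y \<in> carrier_vec n \<Longrightarrow> w \<bullet> (P *\<^sub>v y) = w \<bullet> (Q *\<^sub>v y)"
  shows "P = Q"
proof (rule eq_matI)
  fix i j assume "i < dim_row Q" "j < dim_col Q"
  then show "P $$ (i,j) = Q $$ (i,j)"
    using eq[of "unit_vec n i" "unit_vec n j"] P Q by simp
qed (use P Q in auto)

lemma form_transpose_eqI:
  fixes M X Y :: "complex mat"
  assumes M: "M \<in> carrier_mat d d" and det: "det M \<noteq> 0"
    and f: "\<And>w y. w \<in> carrier_vec d \<Longrightarrow> y \<in> carrier_vec d \<Longrightarrow> f w y = w \<bullet> (M *\<^sub>v y)"
    and X: "X \<in> carrier_mat d d" and Y: "Y \<in> carrier_mat d d"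
    and adjoint: "transpose_mat X * M = M * Y"
  shows "form_transpose f d X = Y"
proof -
  have transposes_iff: "(\<forall>w\<in>carrier_vec d. \<forall>y\<in>carrier_vec d. f (X *\<^sub>v w) y = f w (Z *\<^sub>v y))
      \<longleftrightarrow> M * Z = transpose_mat X * M" if Z: "Z \<in> carrier_mat d d" for Z
  proof -
    have "f (X *\<^sub>v w) y = w \<bullet> ((transpose_mat X * M) *\<^sub>v y)" "f w (Z *\<^sub>v y) = w \<bullet> ((M * Z) *\<^sub>v y)"
      if "w \<in> carrier_vec d" "y \<in> carrier_vec d" for w y
      using that X M Z f transpose_vec_mult_scalar[of X d d w "M *\<^sub>v y"] comm_scalar_prod[of w d]
        comm_scalar_prod[of "X *\<^sub>v w" d "M *\<^sub>v y"]
      by auto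
    then show ?thesis
      using eq_mat_by_scalar_prod[of "M * Z" d "transpose_mat X * M"] X M Z
      by (auto simp del: assoc_mult_mat_vec)
  qed
  show ?thesis
    unfolding form_transpose_def
    using transposes_iff adjoint mult_left_cancel_mat[OF M det _ Y] Y by (intro the_equality) auto
qed

lemma form_transpose_skew_involution:
  fixes J \<sigma> X :: "complex mat"
  assumes J: "J \<in> carrier_mat 2 2" and skew: "transpose_mat J = - J" and det_J: "det J \<noteq> 0"
    and \<sigma>: "\<sigma> \<in> carrier_mat 2 2" and inv: "\<sigma> * \<sigma> = 1\<^sub>m 2" and X: "X \<in> carrier_mat 2 2"
  shows "form_transpose (\<lambda>x y. bilin J x (\<sigma> *\<^sub>v y)) 2 X = \<sigma> * adj_mat X * \<sigma>"
proof (rule form_transpose_eqI)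
  have A: "adj_mat X \<in> carrier_mat 2 2" using adj_mat(1)[OF X] .
  have "det \<sigma> * det \<sigma> = 1" using det_mult[OF \<sigma> \<sigma>] inv by simp
  then show "det (J * \<sigma>) \<noteq> 0" using det_mult[OF J \<sigma>] det_J by auto
  show "bilin J w (\<sigma> *\<^sub>v y) = w \<bullet> ((J * \<sigma>) *\<^sub>v y)" if "y \<in> carrier_vec 2" for w y
    using J \<sigma> that by (simp add: bilin_def)
  have "transpose_mat X * (J * \<sigma>) = (transpose_mat X * J) * \<sigma>"
    by (rule assoc_mult_mat[symmetric]) (use J X \<sigma> in auto)
  also have "\<dots> = J * adj_mat X * \<sigma>" using transpose_mult_skew_2x2[OF J X skew] by simp
  also have "\<dots> = J * (\<sigma> * \<sigma>) * adj_mat X * \<sigma>" using inv J by simp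
  also have "\<dots> = (J * \<sigma>) * (\<sigma> * adj_mat X * \<sigma>)"
    using J \<sigma> A by (simp add: assoc_mult_mat[of _ 2 2 _ 2 _ 2])
  finally show "transpose_mat X * (J * \<sigma>) = (J * \<sigma>) * (\<sigma> * adj_mat X * \<sigma>)" .
qed (use J \<sigma> X adj_mat(1)[OF X] in auto)

lemma pow_mat_Suc_left:
  assumes A: "A \<in> carrier_mat n n"
  shows "A ^\<^sub>m Suc k = A * A ^\<^sub>m k"
proof (induction k)
  case (Suc k)
  have "A ^\<^sub>m Suc (Suc k) = (A * A ^\<^sub>m k) * A" using Suc by simp
  also have "\<dots> = A * (A ^\<^sub>m k * A)" by (rule assoc_mult_mat) (use A in auto)
  finally show ?case by simp
qed (use A in simp)

lemma pow_mat_eq_zero_mono: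
  assumes A: "A \<in> carrier_mat n n" and nil: "A ^\<^sub>m K = 0\<^sub>m n n" and "K \<le> k"
  shows "A ^\<^sub>m k = 0\<^sub>m n n"
  using \<open>K \<le> k\<close>
proof (induction k rule: dec_induct)
  case base then show ?case using nil .
qed (use A in simp)

lemma pow_mat_smult:
  fixes A :: "'a::comm_semiring_1 mat"
  assumes A: "A \<in> carrier_mat n n"
  shows "(c \<cdot>\<^sub>m A) ^\<^sub>m k = c ^ k \<cdot>\<^sub>m A ^\<^sub>m k"
proof (induction k)
  case (Suc k)
  have "(c \<cdot>\<^sub>m A) ^\<^sub>m Suc k = c ^ k \<cdot>\<^sub>m (A ^\<^sub>m k * (c \<cdot>\<^sub>m A))"
    using Suc A mult_smult_assoc_mat[of "A ^\<^sub>m k" n n "c \<cdot>\<^sub>m A" n "c ^ k"] by simp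
  also have "\<dots> = c ^ k \<cdot>\<^sub>m (c \<cdot>\<^sub>m (A ^\<^sub>m k * A))"
    using A mult_smult_distrib[of "A ^\<^sub>m k" n n A n c] by simp
  also have "\<dots> = c ^ Suc k \<cdot>\<^sub>m A ^\<^sub>m Suc k" by (auto intro!: eq_matI simp: ac_simps)
  finally show ?case .
qed (use A in \<open>auto intro!: eq_matI\<close>)

lemma mult_pow_mat_swap:
  assumes X: "X \<in> carrier_mat p q" and Y: "Y \<in> carrier_mat q p"
  shows "X * (Y * X) ^\<^sub>m k * Y = (X * Y) ^\<^sub>m Suc k"
proof (induction k)
  case (Suc k)
  have P: "(Y * X) ^\<^sub>m k \<in> carrier_mat q q" using X Y by simp
  have W: "X * (Y * X) ^\<^sub>m k * Y \<in> carrier_mat p p"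
    using mult_carrier_mat[OF mult_carrier_mat[OF X P] Y] .
  have "X * ((Y * X) ^\<^sub>m k * (Y * X)) = X * (Y * X) ^\<^sub>m k * (Y * X)"
    using X Y P by (simp add: assoc_mult_mat[of X p q _ q _ q])
  also have "\<dots> = X * (Y * X) ^\<^sub>m k * Y * X"
    using X Y P by (simp add: assoc_mult_mat[of "X * (Y * X) ^\<^sub>m k" p q Y p X q])
  finally have "X * (Y * X) ^\<^sub>m Suc k * Y = X * (Y * X) ^\<^sub>m k * Y * X * Y" by simp
  also have "\<dots> = (X * (Y * X) ^\<^sub>m k * Y) * (X * Y)" by (rule assoc_mult_mat[OF W X Y])
  also have "\<dots> = (X * Y) ^\<^sub>m Suc (Suc k)" using Suc by simp
  finally show ?case .
qed (use X Y in simp)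

section \<open>Rank-two perturbations of nilpotent matrices\<close>

definition gen_poly_mat :: "nat \<Rightarrow> nat \<Rightarrow> (nat \<Rightarrow> 'a::comm_ring_1 mat) \<Rightarrow> 'a poly mat" where
  "gen_poly_mat n K f = mat n n (\<lambda>ij. \<Sum>k<K. monom (f k $$ ij) k)"

lemma gen_poly_mat_carrier: "gen_poly_mat n K f \<in> carrier_mat n n"
  and gen_poly_mat_dim [simp]: "dim_row (gen_poly_mat n K f) = n" "dim_col (gen_poly_mat n K f) = n"
  by (simp_all add: gen_poly_mat_def)

lemma coeff_gen_poly_mat:
  assumes "i < n" "j < n" and vanish: "\<And>k. K \<le> k \<Longrightarrow> f k $$ (i,j) = 0"
  shows "coeff (gen_poly_mat n K f $$ (i,j)) k = f k $$ (i,j)"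
  using assms vanish[of k] by (auto simp: gen_poly_mat_def coeff_sum not_less)

lemma gen_poly_mat_convolution:
  fixes f g :: "nat \<Rightarrow> 'a::comm_ring_1 mat"
  assumes carrier: "\<And>k. f k \<in> carrier_mat n n" "\<And>k. g k \<in> carrier_mat n n"
    and vanish: "\<And>k. K \<le> k \<Longrightarrow> f k = 0\<^sub>m n n" "\<And>k. K \<le> k \<Longrightarrow> g k = 0\<^sub>m n n"
    and rec: "\<And>k i j. i < n \<Longrightarrow> j < n \<Longrightarrow>
      g k $$ (i,j) = f k $$ (i,j) + (\<Sum>p<k. (g p * f (k - 1 - p)) $$ (i,j))"
  shows "gen_poly_mat n K g = gen_poly_mat n K f + [:0,1:] \<cdot>\<^sub>m (gen_poly_mat n K g * gen_poly_mat n K f)"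
    (is "?G = ?F + _ \<cdot>\<^sub>m (?G * ?F)")
proof (rule eq_matI)
  fix i j assume "i < dim_row (?F + [:0,1:] \<cdot>\<^sub>m (?G * ?F))" "j < dim_col (?F + [:0,1:] \<cdot>\<^sub>m (?G * ?F))"
  then have ij: "i < n" "j < n" by (auto simp: gen_poly_mat_carrier)
  have cF: "coeff (?F $$ (a,b)) k = f k $$ (a,b)" if "a < n" "b < n" for a b k
    by (rule coeff_gen_poly_mat[OF that]) (use vanish that in simp)
  have cG: "coeff (?G $$ (a,b)) k = g k $$ (a,b)" if "a < n" "b < n" for a b k
    by (rule coeff_gen_poly_mat[OF that]) (use vanish that in simp)
  show "?G $$ (i,j) = (?F + [:0,1:] \<cdot>\<^sub>m (?G * ?F)) $$ (i,j)"
  proof (rule poly_eqI)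
    fix k
    show "coeff (?G $$ (i,j)) k = coeff ((?F + [:0,1:] \<cdot>\<^sub>m (?G * ?F)) $$ (i,j)) k"
    proof (cases k)
      case 0
      then show ?thesis using ij rec[OF ij, of 0] by (simp add: cF cG gen_poly_mat_carrier)
    next
      case (Suc m)
      have "coeff ((?F + [:0,1:] \<cdot>\<^sub>m (?G * ?F)) $$ (i,j)) k
          = f k $$ (i,j) + coeff ((?G * ?F) $$ (i,j)) m"
        using ij Suc by (simp add: cF del: index_mult_mat(1))
      also have "coeff ((?G * ?F) $$ (i,j)) m = (\<Sum>t<n. \<Sum>p\<le>m. g p $$ (i,t) * f (m - p) $$ (t,j))"
        using ij by (simp add: scalar_prod_def coeff_sum coeff_mult cF cG atLeast0LessThan)
      also have "\<dots> = (\<Sum>p<k. (g p * f (k - 1 - p)) $$ (i,j))"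
        using ij carrier[THEN carrier_matD(1)] carrier[THEN carrier_matD(2)] Suc
        by (simp add: scalar_prod_def sum.swap[of _ "{..m}"] lessThan_Suc_atMost atLeast0LessThan)
      also have "f k $$ (i,j) + \<dots> = coeff (?G $$ (i,j)) k"
        using rec[OF ij, of k] cG[OF ij] by simp
      finally show ?thesis by simp
    qed
  qed
qed (auto simp: gen_poly_mat_carrier)

lemma mult_one_minus_eq_one_2x2:
  fixes F G :: "'a::comm_ring_1 mat"
  assumes F: "F \<in> carrier_mat 2 2" and G: "G \<in> carrier_mat 2 2"
    and conv: "G = F + c \<cdot>\<^sub>m (G * F)"
  shows "(1\<^sub>m 2 + c \<cdot>\<^sub>m G) * (1\<^sub>m 2 - c \<cdot>\<^sub>m F) = 1\<^sub>m 2"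
proof (rule eq_matI)
  fix i j assume "i < dim_row (1\<^sub>m 2 :: 'a mat)" "j < dim_col (1\<^sub>m 2 :: 'a mat)"
  then have ij: "i < 2" "j < 2" by auto
  have "G $$ (i,j) = F $$ (i,j) + c * (G $$ (i,0) * F $$ (0,j) + G $$ (i,1) * F $$ (1,j))"
    using arg_cong[OF conv, of "\<lambda>A. A $$ (i,j)"] F G ij by (simp add: scalar_prod_def numeral_2_eq_2)
  moreover have "((1\<^sub>m 2 + c \<cdot>\<^sub>m G) * (1\<^sub>m 2 - c \<cdot>\<^sub>m F)) $$ (i,j) = 1\<^sub>m 2 $$ (i,j)
      + c * (G $$ (i,j) - (F $$ (i,j) + c * (G $$ (i,0) * F $$ (0,j) + G $$ (i,1) * F $$ (1,j))))"
    using F G ij by (cases "i = 0"; cases "j = 0")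
      (simp_all add: scalar_prod_def numeral_2_eq_2 less_Suc_eq algebra_simps)
  ultimately show "((1\<^sub>m 2 + c \<cdot>\<^sub>m G) * (1\<^sub>m 2 - c \<cdot>\<^sub>m F)) $$ (i,j) = 1\<^sub>m 2 $$ (i,j)" by simp
qed (use F G in auto)

lemma det_poly_mat_eq_1_if_left_inverse:
  fixes X Y :: "'a::idom poly mat"
  assumes X: "X \<in> carrier_mat n n" and Y: "Y \<in> carrier_mat n n"
    and inv: "Y * X = 1\<^sub>m n" and const: "poly (det X) 0 = 1"
  shows "det X = 1"
proof -
  have "det Y * det X = 1" using det_mult[OF Y X] inv by simp
  then have "det X dvd 1" by (metis dvdI mult.commute)
  then obtain c where "det X = [:c:]" using is_unit_poly_iff by blast
  with const show ?thesis by (simp add: one_pCons)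
qed

lemma adj_mat_one_minus_smult_2x2:
  fixes F :: "'a::comm_ring_1 mat"
  assumes F: "F \<in> carrier_mat 2 2"
  shows "adj_mat (1\<^sub>m 2 - c \<cdot>\<^sub>m F) = 1\<^sub>m 2 - c \<cdot>\<^sub>m adj_mat F"
  using F by (intro mat_2x2_eqI) (simp_all add: adj_mat_2x2 minus_carrier_mat)

lemma inverse_one_minus_X_smult_2x2:
  fixes F G :: "'a::idom poly mat"
  assumes F: "F \<in> carrier_mat 2 2" and G: "G \<in> carrier_mat 2 2"
    and inverse: "(1\<^sub>m 2 + [:0,1:] \<cdot>\<^sub>m G) * (1\<^sub>m 2 - [:0,1:] \<cdot>\<^sub>m F) = 1\<^sub>m 2"
  shows "G = (-1) \<cdot>\<^sub>m adj_mat F"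
proof -
  define z :: "'a poly" where "z = [:0,1:]"
  have one_minus: "1\<^sub>m 2 - z \<cdot>\<^sub>m F \<in> carrier_mat 2 2" using F by auto
  have "poly (det (1\<^sub>m 2 - z \<cdot>\<^sub>m F)) 0 = 1"
    unfolding det_2x2[OF one_minus] using F by (simp add: z_def)
  with inverse have det: "det (1\<^sub>m 2 - z \<cdot>\<^sub>m F) = 1"
    using one_minus G by (intro det_poly_mat_eq_1_if_left_inverse) (auto simp: z_def)
  have "1\<^sub>m 2 + z \<cdot>\<^sub>m G = adj_mat (1\<^sub>m 2 - z \<cdot>\<^sub>m F)"
    using inverse det one_minus G by (intro adj_mat_eqI) (auto simp: z_def)
  also have "\<dots> = 1\<^sub>m 2 - z \<cdot>\<^sub>m adj_mat F" by (rule adj_mat_one_minus_smult_2x2[OF F])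
  finally have resolvent: "1\<^sub>m 2 + z \<cdot>\<^sub>m G = 1\<^sub>m 2 - z \<cdot>\<^sub>m adj_mat F" .
  have "G $$ (i,j) = ((-1) \<cdot>\<^sub>m adj_mat F) $$ (i,j)" if "i < 2" "j < 2" for i j
  proof -
    have "z * G $$ (i,j) = z * ((-1) \<cdot>\<^sub>m adj_mat F) $$ (i,j)"
      using arg_cong[OF resolvent, of "\<lambda>A. A $$ (i,j)"] F G that by (simp add: adj_mat_2x2)
    moreover have "z \<noteq> 0" by (simp add: z_def)
    ultimately show ?thesis by (metis mult_left_cancel)
  qed
  then show ?thesis using F G adj_mat(1)[OF F] by (intro mat_2x2_eqI) auto
qed

lemma convolution_inverse_adj_mat_2x2:
  fixes f g :: "nat \<Rightarrow> 'a::idom mat"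
  assumes carrier: "\<And>k. f k \<in> carrier_mat 2 2" "\<And>k. g k \<in> carrier_mat 2 2"
    and vanish: "\<And>k. K \<le> k \<Longrightarrow> f k = 0\<^sub>m 2 2" "\<And>k. K \<le> k \<Longrightarrow> g k = 0\<^sub>m 2 2"
    and rec: "\<And>k i j. i < 2 \<Longrightarrow> j < 2 \<Longrightarrow>
      g k $$ (i,j) = f k $$ (i,j) + (\<Sum>p<k. (g p * f (k - 1 - p)) $$ (i,j))"
  shows "adj_mat (f k) = (-1) \<cdot>\<^sub>m g k"
proof -
  define F G where "F = gen_poly_mat 2 K f" and "G = gen_poly_mat 2 K g"
  have F: "F \<in> carrier_mat 2 2" and G: "G \<in> carrier_mat 2 2"
    unfolding F_def G_def by (simp_all add: gen_poly_mat_carrier)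
  have cF: "coeff (F $$ (i,j)) k = f k $$ (i,j)" and cG: "coeff (G $$ (i,j)) k = g k $$ (i,j)"
    if "i < 2" "j < 2" for i j k
    unfolding F_def G_def using that vanish by (simp_all add: coeff_gen_poly_mat)
  have "(1\<^sub>m 2 + [:0,1:] \<cdot>\<^sub>m G) * (1\<^sub>m 2 - [:0,1:] \<cdot>\<^sub>m F) = 1\<^sub>m 2"
    using gen_poly_mat_convolution[OF carrier vanish rec] F G
    unfolding F_def G_def by (intro mult_one_minus_eq_one_2x2) auto
  then have G_adj: "G = (-1) \<cdot>\<^sub>m adj_mat F" by (rule inverse_one_minus_X_smult_2x2[OF F G])
  show ?thesis
  proof (rule eq_matI)
    fix i j assume "i < dim_row ((-1) \<cdot>\<^sub>m g k)" "j < dim_col ((-1) \<cdot>\<^sub>m g k)"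
    then have ij: "i < 2" "j < 2" using carrier[of k] by auto
    have "adj_mat (f k) $$ (i,j) = coeff (adj_mat F $$ (i,j)) k"
      using ij F carrier cF by (auto simp: adj_mat_2x2)
    also have "\<dots> = ((-1) \<cdot>\<^sub>m g k) $$ (i,j)"
      using cG[OF ij] G_adj F carrier[of k] ij adj_mat(1)[OF F] by simp (metis minus_minus)
    finally show "adj_mat (f k) $$ (i,j) = ((-1) \<cdot>\<^sub>m g k) $$ (i,j)" .
  qed (use carrier[of k] in \<open>auto simp: adj_mat_def\<close>)
qed

lemma perturbed_pow_mat_step:
  fixes a \<Gamma> \<Delta> :: "'a::comm_ring_1 mat"
  assumes a: "a \<in> carrier_mat N N" and \<Gamma>: "\<Gamma> \<in> carrier_mat N d" and \<Delta>: "\<Delta> \<in> carrier_mat d N"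
  defines "b \<equiv> a + \<Gamma> * \<Delta>"
  shows "b ^\<^sub>m Suc i * a ^\<^sub>m m = b ^\<^sub>m i * a ^\<^sub>m Suc m + (b ^\<^sub>m i * \<Gamma>) * (\<Delta> * a ^\<^sub>m m)"
proof -
  have b: "b \<in> carrier_mat N N" using a \<Gamma> \<Delta> by (simp add: b_def)
  have bi: "b ^\<^sub>m i \<in> carrier_mat N N" and am: "a ^\<^sub>m m \<in> carrier_mat N N"
    using a b by simp_all
  have "b * a ^\<^sub>m m = a ^\<^sub>m Suc m + \<Gamma> * (\<Delta> * a ^\<^sub>m m)"
    using a \<Gamma> \<Delta> am add_mult_distrib_mat[of a N N "\<Gamma> * \<Delta>" "a ^\<^sub>m m" N]
      assoc_mult_mat[of \<Gamma> N d \<Delta> N "a ^\<^sub>m m" N]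
    by (simp add: b_def pow_mat_Suc_left[OF a] del: pow_mat.simps(2))
  then have "b ^\<^sub>m Suc i * a ^\<^sub>m m = b ^\<^sub>m i * (a ^\<^sub>m Suc m + \<Gamma> * (\<Delta> * a ^\<^sub>m m))"
    using b bi am by (simp add: assoc_mult_mat[of _ N N _ N _ N])
  also have "\<dots> = b ^\<^sub>m i * a ^\<^sub>m Suc m + (b ^\<^sub>m i * \<Gamma>) * (\<Delta> * a ^\<^sub>m m)"
    using a bi am \<Gamma> \<Delta> mult_add_distrib_mat[of "b ^\<^sub>m i" N N "a ^\<^sub>m Suc m" N "\<Gamma> * (\<Delta> * a ^\<^sub>m m)"]
    by (simp add: assoc_mult_mat[of "b ^\<^sub>m i" N N \<Gamma> d _ N] del: pow_mat.simps(2))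
  finally show ?thesis .
qed

lemma mult_sandwich:
  assumes \<Delta>: "\<Delta> \<in> carrier_mat d N" and P: "P \<in> carrier_mat N N" and \<Gamma>: "\<Gamma> \<in> carrier_mat N d"
    and Q: "Q \<in> carrier_mat N N"
  shows "\<Delta> * (P * \<Gamma> * (\<Delta> * Q)) * \<Gamma> = (\<Delta> * P * \<Gamma>) * (\<Delta> * Q * \<Gamma>)"
  using assms by (simp add: assoc_mult_mat[of _ d N _ N _ d] assoc_mult_mat[of _ d N _ d _ N]
      assoc_mult_mat[of _ N d _ N _ N] assoc_mult_mat[of _ N d _ N _ d] assoc_mult_mat[of _ d d _ N _ d]
      assoc_mult_mat[of _ N N _ d _ N] assoc_mult_mat[of _ d N _ N _ N] assoc_mult_mat[of _ N N _ N _ d]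
      assoc_mult_mat[of _ d N _ d _ d] assoc_mult_mat[of _ N N _ d _ d])

lemma mult_add_sandwich:
  fixes P Q :: "'a::semiring_0 mat"
  assumes \<Delta>: "\<Delta> \<in> carrier_mat d N" and P: "P \<in> carrier_mat N N" and Q: "Q \<in> carrier_mat N N"
    and \<Gamma>: "\<Gamma> \<in> carrier_mat N d'"
  shows "\<Delta> * (P + Q) * \<Gamma> = \<Delta> * P * \<Gamma> + \<Delta> * Q * \<Gamma>"
  using assms by (simp add: mult_add_distrib_mat[OF \<Delta> P Q] add_mult_distrib_mat[of _ d N])

lemma sandwich_perturbed_pow_mat:
  fixes a \<Gamma> \<Delta> :: "'a::comm_ring_1 mat"
  assumes a: "a \<in> carrier_mat N N" and \<Gamma>: "\<Gamma> \<in> carrier_mat N d" and \<Delta>: "\<Delta> \<in> carrier_mat d N"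
    and rs: "r < d" "s < d"
  defines "b \<equiv> a + \<Gamma> * \<Delta>"
  shows "(\<Delta> * b ^\<^sub>m k * \<Gamma>) $$ (r,s) = (\<Delta> * a ^\<^sub>m k * \<Gamma>) $$ (r,s)
    + (\<Sum>p<k. ((\<Delta> * b ^\<^sub>m p * \<Gamma>) * (\<Delta> * a ^\<^sub>m (k - 1 - p) * \<Gamma>)) $$ (r,s))"
proof -
  have b: "b \<in> carrier_mat N N" using a \<Gamma> \<Delta> by (simp add: b_def)
  have "(\<Delta> * (b ^\<^sub>m i * a ^\<^sub>m m) * \<Gamma>) $$ (r,s) = (\<Delta> * a ^\<^sub>m (i + m) * \<Gamma>) $$ (r,s)
    + (\<Sum>p<i. ((\<Delta> * b ^\<^sub>m p * \<Gamma>) * (\<Delta> * a ^\<^sub>m (i + m - 1 - p) * \<Gamma>)) $$ (r,s))" for i m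
  proof (induction i arbitrary: m)
    case 0
    then show ?case using a b by simp
  next
    case (Suc i)
    have "\<Delta> * (b ^\<^sub>m Suc i * a ^\<^sub>m m) * \<Gamma>
        = \<Delta> * (b ^\<^sub>m i * a ^\<^sub>m Suc m) * \<Gamma> + \<Delta> * (b ^\<^sub>m i * \<Gamma> * (\<Delta> * a ^\<^sub>m m)) * \<Gamma>"
      unfolding perturbed_pow_mat_step[OF a \<Gamma> \<Delta>, folded b_def]
      by (rule mult_add_sandwich[OF \<Delta> _ _ \<Gamma>]) (use a b \<Gamma> \<Delta> in auto)
    also have "\<Delta> * (b ^\<^sub>m i * \<Gamma> * (\<Delta> * a ^\<^sub>m m)) * \<Gamma> = (\<Delta> * b ^\<^sub>m i * \<Gamma>) * (\<Delta> * a ^\<^sub>m m * \<Gamma>)"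
      using a b \<Gamma> \<Delta> by (simp add: mult_sandwich)
    finally show ?case
      using Suc.IH[of "Suc m"] a b \<Gamma> \<Delta> rs by simp
  qed
  from this[of k 0] show ?thesis using a b by simp
qed

lemma sandwich_nilpotent_perturbation:
  fixes a \<Gamma> \<Delta> :: "'a::idom mat"
  assumes a: "a \<in> carrier_mat N N" and \<Gamma>: "\<Gamma> \<in> carrier_mat N 2" and \<Delta>: "\<Delta> \<in> carrier_mat 2 N"
    and nil_a: "a ^\<^sub>m K = 0\<^sub>m N N" and nil_b: "(a + \<Gamma> * \<Delta>) ^\<^sub>m K = 0\<^sub>m N N"
  shows "adj_mat (\<Delta> * a ^\<^sub>m k * \<Gamma>) = (-1) \<cdot>\<^sub>m (\<Delta> * (a + \<Gamma> * \<Delta>) ^\<^sub>m k * \<Gamma>)"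
proof (rule convolution_inverse_adj_mat_2x2)
  have b: "a + \<Gamma> * \<Delta> \<in> carrier_mat N N" using a \<Gamma> \<Delta> by simp
  show "\<Delta> * a ^\<^sub>m k * \<Gamma> \<in> carrier_mat 2 2" "\<Delta> * (a + \<Gamma> * \<Delta>) ^\<^sub>m k * \<Gamma> \<in> carrier_mat 2 2" for k
    using a b \<Gamma> \<Delta> by (blast intro: mult_carrier_mat pow_carrier_mat)+
  show "\<Delta> * a ^\<^sub>m k * \<Gamma> = 0\<^sub>m 2 2" "\<Delta> * (a + \<Gamma> * \<Delta>) ^\<^sub>m k * \<Gamma> = 0\<^sub>m 2 2" if "K \<le> k" for k
    using pow_mat_eq_zero_mono[OF a nil_a that] pow_mat_eq_zero_mono[OF b nil_b that] \<Gamma> \<Delta> by simp_all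
  show "(\<Delta> * (a + \<Gamma> * \<Delta>) ^\<^sub>m k * \<Gamma>) $$ (i,j) = (\<Delta> * a ^\<^sub>m k * \<Gamma>) $$ (i,j)
    + (\<Sum>p<k. ((\<Delta> * (a + \<Gamma> * \<Delta>) ^\<^sub>m p * \<Gamma>) * (\<Delta> * a ^\<^sub>m (k - 1 - p) * \<Gamma>)) $$ (i,j))"
    if "i < 2" "j < 2" for k i j
    using sandwich_perturbed_pow_mat[OF a \<Gamma> \<Delta> that] .
qed

section \<open>Ladders of arrows\<close>

lemma path_down_eq_pow:
  fixes B :: "nat \<Rightarrow> nat \<Rightarrow> complex mat"
  assumes down: "\<And>i. 1 \<le> i \<Longrightarrow> i \<le> m \<Longrightarrow> B i (i-1) \<in> carrier_mat (v i) (v (i-1))"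
    and up: "\<And>i. 1 \<le> i \<Longrightarrow> i \<le> m \<Longrightarrow> B (i-1) i \<in> carrier_mat (v (i-1)) (v i)"
    and rel: "\<And>i. 1 \<le> i \<Longrightarrow> i < m \<Longrightarrow> B i (i+1) * B (i+1) i = B i (i-1) * B (i-1) i"
    and "k < m"
  shows "path_down v B m k = (B m (m-1) * B (m-1) m) ^\<^sub>m k"
  using assms
proof (induction k arbitrary: m)
  case 0
  have "B m (m-1) \<in> carrier_mat (v m) (v (m-1))" using "0.prems" by simp
  then show ?case by simp
next
  case (Suc k)
  have m: "2 \<le> m" using Suc.prems(4) by simp
  have "path_down v B (m-1) k = (B (m-1) (m-1-1) * B (m-1-1) (m-1)) ^\<^sub>m k"
    using Suc.prems by (intro Suc.IH) auto
  also have "B (m-1) (m-1-1) * B (m-1-1) (m-1) = B (m-1) m * B m (m-1)"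
    using Suc.prems(3)[of "m-1"] m by simp
  finally have "path_down v B m (Suc k) = B m (m-1) * (B (m-1) m * B m (m-1)) ^\<^sub>m k * B (m-1) m"
    by simp
  also have "\<dots> = (B m (m-1) * B (m-1) m) ^\<^sub>m Suc k"
    using Suc.prems(1,2)[of m] m by (intro mult_pow_mat_swap) auto
  finally show ?case .
qed

lemma ladder_pow_nilpotent:
  fixes B :: "nat \<Rightarrow> nat \<Rightarrow> 'a::semiring_1 mat"
  assumes down: "\<And>i. 1 \<le> i \<Longrightarrow> i \<le> m \<Longrightarrow> B i (i-1) \<in> carrier_mat (v i) (v (i-1))"
    and up: "\<And>i. 1 \<le> i \<Longrightarrow> i \<le> m \<Longrightarrow> B (i-1) i \<in> carrier_mat (v (i-1)) (v i)"
    and rel: "\<And>i. 1 \<le> i \<Longrightarrow> i < m \<Longrightarrow> B i (i+1) * B (i+1) i = B i (i-1) * B (i-1) i"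
    and bottom: "B 1 0 * B 0 1 = 0\<^sub>m (v 1) (v 1)"
    and "1 \<le> m"
  shows "(B m (m-1) * B (m-1) m) ^\<^sub>m m = 0\<^sub>m (v m) (v m)"
  using assms
proof (induction m)
  case (Suc m)
  have L: "B (Suc m) m \<in> carrier_mat (v (Suc m)) (v m)" and R: "B m (Suc m) \<in> carrier_mat (v m) (v (Suc m))"
    using Suc.prems(1,2)[of "Suc m"] by auto
  show ?case
  proof (cases "m = 0")
    case True
    then show ?thesis using Suc.prems(4) L R by simp
  next
    case False
    have "(B (Suc m) m * B m (Suc m)) ^\<^sub>m Suc m = B (Suc m) m * (B m (Suc m) * B (Suc m) m) ^\<^sub>m m * B m (Suc m)"
      using L R by (simp add: mult_pow_mat_swap)
    also have "B m (Suc m) * B (Suc m) m = B m (m-1) * B (m-1) m"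
      using Suc.prems(3)[of m] False by simp
    also have "(B m (m-1) * B (m-1) m) ^\<^sub>m m = 0\<^sub>m (v m) (v m)"
      using Suc.prems False by (intro Suc.IH) auto
    finally show ?thesis using L R by simp
  qed
qed simp

lemma path_down_cong:
  assumes "k \<le> m"
    and "\<And>i. m - k < i \<Longrightarrow> i \<le> m \<Longrightarrow> B i (i-1) = B' i (i-1) \<and> B (i-1) i = B' (i-1) i"
  shows "path_down v B m k = path_down v B' m k"
  using assms
proof (induction k arbitrary: m)
  case (Suc k)
  have "path_down v B (m-1) k = path_down v B' (m-1) k"
    using Suc.prems by (intro Suc.IH) auto
  then show ?case using Suc.prems(2)[of m] Suc.prems(1) by simp
qed simp

lemma path_up_reflect:
  assumes "k \<le> m" "m \<le> N"
  shows "path_up v B (N - m) k = path_down (\<lambda>i. v (N - i)) (\<lambda>i j. B (N - i) (N - j)) m k"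
  using assms
proof (induction k arbitrary: m)
  case (Suc k)
  have "N - (m - 1) = Suc (N - m)" using Suc.prems by simp
  moreover have "path_up v B (N - (m - 1)) k = path_down (\<lambda>i. v (N - i)) (\<lambda>i j. B (N - i) (N - j)) (m - 1) k"
    using Suc.prems by (intro Suc.IH) auto
  ultimately show ?case by simp
qed simp

section \<open>Representations of the quiver of type A\<close>

lemma eq_if_minus_eq_mult_zero_dim:
  fixes X Y :: "'a::comm_ring_1 mat"
  assumes X: "X \<in> carrier_mat p q" and Y: "Y \<in> carrier_mat p q"
    and \<Gamma>: "\<Gamma> \<in> carrier_mat p 0" and \<Delta>: "\<Delta> \<in> carrier_mat 0 q" and diff: "X - Y = \<Gamma> * \<Delta>"
  shows "X = Y"
proof (rule eq_matI)
  fix i j assume "i < dim_row Y" "j < dim_col Y"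
  then show "X $$ (i,j) = Y $$ (i,j)"
    using arg_cong[OF diff, of "\<lambda>A. A $$ (i,j)"] X Y \<Gamma> \<Delta> by (simp add: scalar_prod_def)
qed (use X Y in auto)

definition down_loop :: "nat \<Rightarrow> (nat \<Rightarrow> nat) \<Rightarrow> (nat \<Rightarrow> nat \<Rightarrow> complex mat) \<Rightarrow> complex mat" where
  "down_loop n v B = Bz n v B n (n-1) * Bz n v B (n-1) n"

definition up_loop :: "nat \<Rightarrow> (nat \<Rightarrow> nat) \<Rightarrow> (nat \<Rightarrow> nat \<Rightarrow> complex mat) \<Rightarrow> complex mat" where
  "up_loop n v B = Bz n v B n (n+1) * Bz n v B (n+1) n"

context
  fixes n :: nat and v w :: "nat \<Rightarrow> nat" and B :: "nat \<Rightarrow> nat \<Rightarrow> complex mat"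
    and \<Gamma> \<Delta> :: "nat \<Rightarrow> complex mat"
  assumes n: "1 \<le> n" and w: "\<forall>i. w i = (if i = n then 2 else 0)"
    and L: "Lambda_A n v w B \<Gamma> \<Delta>"
begin

lemma Bz_carrier: "i = j + 1 \<or> j = i + 1 \<Longrightarrow> Bz n v B i j \<in> carrier_mat (v i) (v j)"
  using L unfolding Lambda_A_def Bz_def by auto

lemma down_loop_carrier: "down_loop n v B \<in> carrier_mat (v n) (v n)"
  using Bz_carrier[of n "n-1"] Bz_carrier[of "n-1" n] n by (auto simp: down_loop_def)

lemma up_loop_carrier: "up_loop n v B \<in> carrier_mat (v n) (v n)"
  using Bz_carrier[of n "n+1"] Bz_carrier[of "n+1" n] by (auto simp: up_loop_def)

lemma Gamma_Delta_carrier_off_centre: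
  assumes "1 \<le> i" "i \<le> 2*n-1" "i \<noteq> n"
  shows "\<Gamma> i \<in> carrier_mat (v i) 0" "\<Delta> i \<in> carrier_mat 0 (v i)"
  using L w assms unfolding Lambda_A_def by auto

lemma Lambda_A_left_rel:
  assumes "1 \<le> i" "i < n"
  shows "Bz n v B i (i+1) * Bz n v B (i+1) i = Bz n v B i (i-1) * Bz n v B (i-1) i"
proof (rule eq_if_minus_eq_mult_zero_dim)
  show "Bz n v B i (i+1) * Bz n v B (i+1) i \<in> carrier_mat (v i) (v i)"
    using Bz_carrier[of "i+1" i] Bz_carrier[of i "i+1"] by auto
  show "Bz n v B i (i-1) * Bz n v B (i-1) i \<in> carrier_mat (v i) (v i)"
    using Bz_carrier[of "i-1" i] Bz_carrier[of i "i-1"] assms by auto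
  show "\<Gamma> i \<in> carrier_mat (v i) 0" "\<Delta> i \<in> carrier_mat 0 (v i)"
    using Gamma_Delta_carrier_off_centre assms by auto
  show "Bz n v B i (i+1) * Bz n v B (i+1) i - Bz n v B i (i-1) * Bz n v B (i-1) i = \<Gamma> i * \<Delta> i"
    using L assms unfolding Lambda_A_def by auto
qed

lemma Lambda_A_right_rel:
  assumes "n < i" "i \<le> 2*n-1"
  shows "Bz n v B i (i-1) * Bz n v B (i-1) i = Bz n v B i (i+1) * Bz n v B (i+1) i"
proof (rule eq_if_minus_eq_mult_zero_dim)
  show "Bz n v B i (i+1) * Bz n v B (i+1) i \<in> carrier_mat (v i) (v i)"
    using Bz_carrier[of "i+1" i] Bz_carrier[of i "i+1"] by auto
  show "Bz n v B i (i-1) * Bz n v B (i-1) i \<in> carrier_mat (v i) (v i)"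
    using Bz_carrier[of "i-1" i] Bz_carrier[of i "i-1"] assms by auto
  show "\<Gamma> i \<in> carrier_mat (v i) 0" "\<Delta> i \<in> carrier_mat 0 (v i)"
    using Gamma_Delta_carrier_off_centre assms by auto
  show "Bz n v B i (i-1) * Bz n v B (i-1) i - Bz n v B i (i+1) * Bz n v B (i+1) i = \<Gamma> i * \<Delta> i"
    using L assms unfolding Lambda_A_def by auto
qed

lemma path_down_centre:
  assumes "k < n"
  shows "path_down v B n k = down_loop n v B ^\<^sub>m k"
proof -
  have "path_down v B n k = path_down v (Bz n v B) n k"
    using assms by (intro path_down_cong) (auto simp: Bz_def)
  also have "\<dots> = down_loop n v B ^\<^sub>m k"
    unfolding down_loop_def using Bz_carrier Lambda_A_left_rel assms by (intro path_down_eq_pow) auto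
  finally show ?thesis .
qed

lemma down_loop_nilpotent: "down_loop n v B ^\<^sub>m n = 0\<^sub>m (v n) (v n)"
  unfolding down_loop_def
proof (rule ladder_pow_nilpotent)
  show "Bz n v B 1 0 * Bz n v B 0 1 = 0\<^sub>m (v 1) (v 1)"
    using Bz_carrier[of 0 1] by (simp add: Bz_def)
qed (use Bz_carrier Lambda_A_left_rel n in auto)

lemma mirrored_ladder:
  defines "v' \<equiv> \<lambda>i. v (2*n - i)" and "B' \<equiv> \<lambda>i j. Bz n v B (2*n - i) (2*n - j)"
  shows "\<And>i. 1 \<le> i \<Longrightarrow> i \<le> n \<Longrightarrow> B' i (i-1) \<in> carrier_mat (v' i) (v' (i-1))"
    and "\<And>i. 1 \<le> i \<Longrightarrow> i \<le> n \<Longrightarrow> B' (i-1) i \<in> carrier_mat (v' (i-1)) (v' i)"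
    and "\<And>i. 1 \<le> i \<Longrightarrow> i < n \<Longrightarrow> B' i (i+1) * B' (i+1) i = B' i (i-1) * B' (i-1) i"
proof -
  fix i assume i: "1 \<le> i" "i \<le> n"
  then have "2*n - (i-1) = 2*n - i + 1" by simp
  then show "B' i (i-1) \<in> carrier_mat (v' i) (v' (i-1))" "B' (i-1) i \<in> carrier_mat (v' (i-1)) (v' i)"
    using Bz_carrier[of "2*n - (i-1)" "2*n - i"] Bz_carrier[of "2*n - i" "2*n - (i-1)"]
    by (simp_all add: B'_def v'_def)
next
  fix i assume i: "1 \<le> i" "i < n"
  then have "2*n - (i+1) = 2*n - i - 1" "2*n - (i-1) = 2*n - i + 1" by simp_all
  then show "B' i (i+1) * B' (i+1) i = B' i (i-1) * B' (i-1) i"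
    using Lambda_A_right_rel[of "2*n - i"] i by (simp add: B'_def)
qed

lemma path_up_centre:
  assumes "k < n"
  shows "path_up v B n k = up_loop n v B ^\<^sub>m k"
proof -
  have "path_up v B n k = path_down (\<lambda>i. v (2*n - i)) (\<lambda>i j. B (2*n - i) (2*n - j)) n k"
    using path_up_reflect[of k n "2*n" v B] assms by simp
  also have "\<dots> = path_down (\<lambda>i. v (2*n - i)) (\<lambda>i j. Bz n v B (2*n - i) (2*n - j)) n k"
    using assms by (intro path_down_cong) (auto simp: Bz_def)
  also have "\<dots> = up_loop n v B ^\<^sub>m k"
    using path_down_eq_pow[OF mirrored_ladder assms] n by (simp add: up_loop_def Suc_diff_le)
  finally show ?thesis .
qed

lemma up_loop_nilpotent: "up_loop n v B ^\<^sub>m n = 0\<^sub>m (v n) (v n)"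
proof -
  have "Bz n v B (2*n - 1) (2*n) = 0\<^sub>m (v (2*n - 1)) (v (2*n))"
    unfolding Bz_def using n by auto
  moreover have "Bz n v B (2*n) (2*n - 1) \<in> carrier_mat (v (2*n)) (v (2*n - 1))"
    using Bz_carrier[of "2*n" "2*n - 1"] n by auto
  ultimately have "Bz n v B (2*n - 1) (2*n) * Bz n v B (2*n) (2*n - 1) = 0\<^sub>m (v (2*n - 1)) (v (2*n - 1))"
    by simp
  then show ?thesis
    using ladder_pow_nilpotent[OF mirrored_ladder _ n] n by (simp add: up_loop_def Suc_diff_le)
qed

lemma Lambda_A_centre:
  shows "\<Gamma> n \<in> carrier_mat (v n) 2" "\<Delta> n \<in> carrier_mat 2 (v n)"
    and "down_loop n v B + \<Gamma> n * \<Delta> n = (-1) \<cdot>\<^sub>m up_loop n v B"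
proof -
  show \<Gamma>: "\<Gamma> n \<in> carrier_mat (v n) 2" and \<Delta>: "\<Delta> n \<in> carrier_mat 2 (v n)"
    using L n w unfolding Lambda_A_def by auto
  note a = down_loop_carrier and b = up_loop_carrier
  have centre: "- down_loop n v B - up_loop n v B = \<Gamma> n * \<Delta> n"
    using L unfolding Lambda_A_def down_loop_def up_loop_def by auto
  show "down_loop n v B + \<Gamma> n * \<Delta> n = (-1) \<cdot>\<^sub>m up_loop n v B"
  proof (rule eq_matI)
    fix i j assume "i < dim_row ((-1) \<cdot>\<^sub>m up_loop n v B)" "j < dim_col ((-1) \<cdot>\<^sub>m up_loop n v B)"
    then have ij: "i < v n" "j < v n" using b by auto
    have "(\<Gamma> n * \<Delta> n) $$ (i,j) = - down_loop n v B $$ (i,j) - up_loop n v B $$ (i,j)"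
      using arg_cong[OF centre[symmetric], of "\<lambda>A. A $$ (i,j)"] a b ij by simp
    then show "(down_loop n v B + \<Gamma> n * \<Delta> n) $$ (i,j) = ((-1) \<cdot>\<^sub>m up_loop n v B) $$ (i,j)"
      using a b \<Gamma> \<Delta> ij by simp
  qed (use a b \<Gamma> \<Delta> in auto)
qed

lemma adj_mat_sandwich_path_down:
  assumes "k < n"
  shows "adj_mat (\<Delta> n * path_down v B n k * \<Gamma> n) = (-1) ^ Suc k \<cdot>\<^sub>m (\<Delta> n * path_up v B n k * \<Gamma> n)"
proof -
  note a = down_loop_carrier and b = up_loop_carrier
    and \<Gamma> = Lambda_A_centre(1) and \<Delta> = Lambda_A_centre(2) and perturbed = Lambda_A_centre(3)
  have "(down_loop n v B + \<Gamma> n * \<Delta> n) ^\<^sub>m n = 0\<^sub>m (v n) (v n)"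
    by (simp add: perturbed pow_mat_smult[OF b] up_loop_nilpotent)
  then have "adj_mat (\<Delta> n * down_loop n v B ^\<^sub>m k * \<Gamma> n)
      = (-1) \<cdot>\<^sub>m (\<Delta> n * (down_loop n v B + \<Gamma> n * \<Delta> n) ^\<^sub>m k * \<Gamma> n)"
    by (rule sandwich_nilpotent_perturbation[OF a \<Gamma> \<Delta> down_loop_nilpotent])
  also have "\<dots> = (-1) ^ Suc k \<cdot>\<^sub>m (\<Delta> n * up_loop n v B ^\<^sub>m k * \<Gamma> n)"
    using \<Gamma> \<Delta> b by (auto simp: perturbed pow_mat_smult[OF b] mult_smult_distrib[of _ 2 "v n" _ "v n"]
        mult_smult_assoc_mat[of _ 2 "v n" _ 2] intro!: eq_matI)
  finally show ?thesis using path_down_centre[OF assms] path_up_centre[OF assms] by simp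
qed

end

theorem lemma4p11:
  fixes n :: nat and v w :: "nat \<Rightarrow> nat"
    and B :: "nat \<Rightarrow> nat \<Rightarrow> complex mat" and \<Gamma> \<Delta> :: "nat \<Rightarrow> complex mat"
    and \<sigma> J :: "complex mat" and j :: nat
  assumes "n \<ge> 1"
    and "\<forall>i. 1 \<le> i \<and> i \<le> 2*n-1 \<longrightarrow> v i = v (2*n - i)"
    and "\<forall>i. w i = (if i = n then 2 else 0)"
    and "nonempty_cond n v"
    and "\<sigma> \<in> carrier_mat 2 2" and "\<sigma> * \<sigma> = 1\<^sub>m 2"
    and "J \<in> carrier_mat 2 2" and "transpose_mat J = - J" and "det J \<noteq> 0"
    and "Lambda_A n v w B \<Gamma> \<Delta>"
    and "1 \<le> j" and "j \<le> n"
  shows "form_transpose (\<lambda>x y. bilin J x (\<sigma> *\<^sub>v y)) 2 (\<Delta> n * path_down v B n (j-1) * \<Gamma> n)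
         = ((-1) ^ j :: complex) \<cdot>\<^sub>m (\<sigma> * \<Delta> n * path_up v B n (j-1) * \<Gamma> n * \<sigma>)"
proof -
  note n = assms(1) and w = assms(3) and \<sigma> = assms(5) and L = assms(10)
  have k: "j - 1 < n" and j: "Suc (j - 1) = j" using assms(11,12) by auto
  note \<Gamma> = Lambda_A_centre(1)[OF n w L] and \<Delta> = Lambda_A_centre(2)[OF n w L]
  have down: "path_down v B n (j-1) \<in> carrier_mat (v n) (v n)"
    using path_down_centre[OF n w L k] down_loop_carrier[OF n w L] by simp
  have up: "path_up v B n (j-1) \<in> carrier_mat (v n) (v n)"
    using path_up_centre[OF n w L k] up_loop_carrier[OF n w L] by simp
  have "form_transpose (\<lambda>x y. bilin J x (\<sigma> *\<^sub>v y)) 2 (\<Delta> n * path_down v B n (j-1) * \<Gamma> n)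
      = \<sigma> * adj_mat (\<Delta> n * path_down v B n (j-1) * \<Gamma> n) * \<sigma>"
    using \<Gamma> \<Delta> down assms(5-9) by (intro form_transpose_skew_involution) auto
  also have "\<dots> = \<sigma> * ((-1) ^ j \<cdot>\<^sub>m (\<Delta> n * path_up v B n (j-1) * \<Gamma> n)) * \<sigma>"
    using adj_mat_sandwich_path_down[OF n w L k] j by simp
  also have "\<dots> = (-1) ^ j \<cdot>\<^sub>m (\<sigma> * \<Delta> n * path_up v B n (j-1) * \<Gamma> n * \<sigma>)"
    using \<sigma> \<Gamma> \<Delta> up
    by (simp add: mult_smult_distrib[of \<sigma> 2 2 _ 2] mult_smult_assoc_mat[of _ 2 2 \<sigma> 2]
        assoc_mult_mat[of _ 2 "v n" _ "v n" _ 2] assoc_mult_mat[of _ 2 2 _ "v n" _ 2]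
        assoc_mult_mat[of _ 2 2 _ "v n" _ "v n"] assoc_mult_mat[of _ 2 2 _ 2 _ 2]
        assoc_mult_mat[of _ 2 "v n" _ 2 _ 2] assoc_mult_mat[of _ "v n" 2 _ 2 _ 2])
  finally show ?thesis .
qed

end
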